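(* Let $M$ be a manifold with local coordinates $x^1,\dots,x^N$, and let $X_1,\dots,X_r,Y_1,\dots,Y_r$ be smooth vector fields on $M$ (we write $\sum X\otimes Y$ for $\sum_{s=1}^r X_s\otimes Y_s$ and suppress the index $s$). Put $\omega^{ij}=\sum (X^iY^j-X^jY^i)$ and assume the matrix $(\omega^{ij})$ is invertible at every point, with inverse $(\omega_{ij})$, i.e. $\omega^{kj}\omega_{js}=\delta^k_s$. Define $$\Gamma^i_{jp}=-\sum \omega_{js}\,\big(X^s\,Y^i_{\ ,p}-Y^s\,X^i_{\ ,p}\big)$$ and let $\nabla$ be the connection on $1$-forms given by $\nabla_{\partial_j}(\xi_i\,{\rm d}x^i)=\xi_{i,j}\,{\rm d}x^i-\Gamma^i_{jp}\,\xi_i\,{\rm d}x^p$. For $a\in C^\infty(M)$ let $\hat a$ be the vector field with components $\hat a^j=\omega^{kj}a_{,k}$, i.e. $\hat a=\sum\big(X(a)\,Y-Y(a)\,X\big)$. Then for all $a\in C^\infty(M)$ and all $1$-forms $\xi$, $$\nabla_{\hat a}\xi=\sum\Big( X(a)\,\big({\rm d}\langle Y,\xi\rangle+\varpi_Y{\rm d}\xi\big)-Y(a)\,\big({\rm d}\langle X,\xi\rangle+\varpi_X{\rm d}\xi\big)\Big),$$ where $\varpi_Z$ denotes interior product with the vector field $Z$ and $\langle Z,\xi\rangle$ the pairing of a vector field with a $1$-form.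
   Context: Subscripts after a comma denote partial derivatives, e.g. $a_{,k}=\partial a/\partial x^k$, $Y^i_{\ ,p}=\partial Y^i/\partial x^p$; repeated indices are summed. This connection arises as follows: with $F^{-1}=1\otimes 1+\hbar\sum X\otimes Y+O(\hbar^2)$ acting by Lie derivatives and the deformed products $a\bullet\xi=(F^{-(1)}\triangleright a)(F^{-(2)}\triangleright \xi)$, one has $a\bullet\xi-\xi\bullet a=\hbar\nabla_{\hat a}\xi+O(\hbar^2)$. *)

theory Defs
  imports "HOL-Analysis.Analysis"
begin

text \<open>Local coordinates: points of a chart domain are vectors x :: real^'n,
  coordinate index type 'n (N = CARD('n)). Vector fields and 1-forms are given
  by their component functions.\<close>

definition pd :: "'n::finite \<Rightarrow> (real^'n \<Rightarrow> real) \<Rightarrow> real^'n \<Rightarrow> real" where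
  "pd k f x = frechet_derivative f (at x) (axis k 1)"

fun iter_pd :: "'n::finite list \<Rightarrow> (real^'n \<Rightarrow> real) \<Rightarrow> real^'n \<Rightarrow> real" where
  "iter_pd [] f = f"
| "iter_pd (k # ks) f = pd k (iter_pd ks f)"

definition smooth_fun_on :: "(real^'n::finite) set \<Rightarrow> (real^'n \<Rightarrow> real) \<Rightarrow> bool" where
  "smooth_fun_on U f \<longleftrightarrow> (\<forall>ks. \<forall>x\<in>U. iter_pd ks f differentiable (at x))"

definition smooth_field_on :: "(real^'n::finite) set \<Rightarrow> (real^'n \<Rightarrow> real^'n) \<Rightarrow> bool" where
  "smooth_field_on U V \<longleftrightarrow> (\<forall>i. smooth_fun_on U (\<lambda>x. V x $ i))"

definition omega_up :: "nat \<Rightarrow> (nat \<Rightarrow> real^'n \<Rightarrow> real^'n) \<Rightarrow> (nat \<Rightarrow> real^'n \<Rightarrow> real^'n)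
    \<Rightarrow> real^'n::finite \<Rightarrow> real^'n^'n" where
  "omega_up r X Y x = (\<chi> i j. \<Sum>s<r. X s x $ i * Y s x $ j - X s x $ j * Y s x $ i)"

definition omega_low :: "nat \<Rightarrow> (nat \<Rightarrow> real^'n \<Rightarrow> real^'n) \<Rightarrow> (nat \<Rightarrow> real^'n \<Rightarrow> real^'n)
    \<Rightarrow> real^'n::finite \<Rightarrow> real^'n^'n" where
  "omega_low r X Y x = matrix_inv (omega_up r X Y x)"

definition Gamma :: "nat \<Rightarrow> (nat \<Rightarrow> real^'n \<Rightarrow> real^'n) \<Rightarrow> (nat \<Rightarrow> real^'n \<Rightarrow> real^'n)
    \<Rightarrow> real^'n::finite \<Rightarrow> 'n \<Rightarrow> 'n \<Rightarrow> 'n \<Rightarrow> real" where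
  "Gamma r X Y x i j p =
     - (\<Sum>t<r. \<Sum>s\<in>UNIV. omega_low r X Y x $ j $ s *
          (X t x $ s * pd p (\<lambda>y. Y t y $ i) x - Y t x $ s * pd p (\<lambda>y. X t y $ i) x))"

definition nabla :: "nat \<Rightarrow> (nat \<Rightarrow> real^'n \<Rightarrow> real^'n) \<Rightarrow> (nat \<Rightarrow> real^'n \<Rightarrow> real^'n)
    \<Rightarrow> (real^'n::finite \<Rightarrow> real^'n) \<Rightarrow> (real^'n \<Rightarrow> real^'n) \<Rightarrow> real^'n \<Rightarrow> real^'n" where
  "nabla r X Y V \<xi> x = (\<chi> p. \<Sum>j\<in>UNIV. V x $ j *
       (pd j (\<lambda>y. \<xi> y $ p) x - (\<Sum>i\<in>UNIV. Gamma r X Y x i j p * \<xi> x $ i)))"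

definition hat :: "nat \<Rightarrow> (nat \<Rightarrow> real^'n \<Rightarrow> real^'n) \<Rightarrow> (nat \<Rightarrow> real^'n \<Rightarrow> real^'n)
    \<Rightarrow> (real^'n::finite \<Rightarrow> real) \<Rightarrow> real^'n \<Rightarrow> real^'n" where
  "hat r X Y a x = (\<chi> j. \<Sum>k\<in>UNIV. omega_up r X Y x $ k $ j * pd k a x)"

definition vf_app :: "(real^'n::finite \<Rightarrow> real^'n) \<Rightarrow> (real^'n \<Rightarrow> real) \<Rightarrow> real^'n \<Rightarrow> real" where
  "vf_app Z a x = (\<Sum>k\<in>UNIV. Z x $ k * pd k a x)"

definition pairing :: "(real^'n::finite \<Rightarrow> real^'n) \<Rightarrow> (real^'n \<Rightarrow> real^'n) \<Rightarrow> real^'n \<Rightarrow> real" where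
  "pairing Z \<xi> x = (\<Sum>i\<in>UNIV. Z x $ i * \<xi> x $ i)"

definition dfun :: "(real^'n::finite \<Rightarrow> real) \<Rightarrow> real^'n \<Rightarrow> real^'n" where
  "dfun f x = (\<chi> p. pd p f x)"

text \<open>Exterior derivative of a 1-form as a 2-form in components:
  (d xi)_{ip} = (d xi)(d_i, d_p) = xi_{p,i} - xi_{i,p}.\<close>
definition dform1 :: "(real^'n::finite \<Rightarrow> real^'n) \<Rightarrow> real^'n \<Rightarrow> real^'n^'n" where
  "dform1 \<xi> x = (\<chi> i p. pd i (\<lambda>y. \<xi> y $ p) x - pd p (\<lambda>y. \<xi> y $ i) x)"

definition interior2 :: "(real^'n::finite \<Rightarrow> real^'n) \<Rightarrow> (real^'n \<Rightarrow> real^'n^'n) \<Rightarrow> real^'n \<Rightarrow> real^'n" where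
  "interior2 Z \<beta> x = (\<chi> p. \<Sum>i\<in>UNIV. Z x $ i * \<beta> x $ i $ p)"

end

theory Submission
  imports Defs
begin

text \<open>Contracting \<open>\<omega>\<^sup>k\<^sup>j \<omega>\<^sub>j\<^sub>s = \<delta>\<^sup>k\<^sub>s\<close> with \<open>\<hat>a\<^sup>j = \<omega>\<^sup>k\<^sup>j a\<^sub>,\<^sub>k\<close> gives
  \<open>\<hat>a\<^sup>j \<omega>\<^sub>j\<^sub>s = a\<^sub>,\<^sub>s\<close>, so the connection term along \<open>\<hat>a\<close> collapses to
  \<open>\<hat>a\<^sup>j \<Gamma>\<^sup>i\<^sub>j\<^sub>p = - \<Sum> (X(a) Y\<^sup>i\<^sub>,\<^sub>p - Y(a) X\<^sup>i\<^sub>,\<^sub>p)\<close>; together with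
  \<open>\<hat>a = \<Sum> (X(a) Y - Y(a) X)\<close> this yields \<open>\<nabla>\<^bsub>\<hat>a\<^esub>\<xi> = \<Sum> (X(a) L\<^sub>Y\<xi> - Y(a) L\<^sub>X\<xi>)\<close>,
  where \<open>L\<^sub>Z\<close> is the Lie derivative of 1-forms. Cartan's formula
  \<open>L\<^sub>Z\<xi> = d\<langle>Z,\<xi>\<rangle> + \<varpi>\<^sub>Z d\<xi>\<close> then gives the claim.\<close>

definition lie_derivative_form :: "(real^'n::finite \<Rightarrow> real^'n) \<Rightarrow> (real^'n \<Rightarrow> real^'n) \<Rightarrow> real^'n \<Rightarrow> real^'n" where
  "lie_derivative_form Z \<xi> x =
     (\<chi> p. \<Sum>i\<in>UNIV. Z x $ i * pd i (\<lambda>y. \<xi> y $ p) x + \<xi> x $ i * pd p (\<lambda>y. Z y $ i) x)"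

lemma matrix_mul_matrix_inv: "invertible A \<Longrightarrow> A ** matrix_inv A = mat 1"
  unfolding invertible_def matrix_inv_def
  using someI_ex[of "\<lambda>A'. A ** A' = mat 1 \<and> A' ** A = mat 1"] by blast

lemma smooth_fun_on_differentiable: "smooth_fun_on U f \<Longrightarrow> x \<in> U \<Longrightarrow> f differentiable (at x)"
  unfolding smooth_fun_on_def by (metis iter_pd.simps(1))

lemma smooth_field_on_differentiable:
  "smooth_field_on U Z \<Longrightarrow> x \<in> U \<Longrightarrow> (\<lambda>y. Z y $ i) differentiable (at x)"
  unfolding smooth_field_on_def using smooth_fun_on_differentiable by blast

lemma pd_sum_mult:
  fixes f g :: "'i \<Rightarrow> real^'n::finite \<Rightarrow> real"
  assumes "finite I" "\<And>i. f i differentiable (at x)" "\<And>i. g i differentiable (at x)"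
  shows "pd p (\<lambda>y. \<Sum>i\<in>I. f i y * g i y) x = (\<Sum>i\<in>I. pd p (f i) x * g i x + f i x * pd p (g i) x)"
proof -
  have "((\<lambda>y. \<Sum>i\<in>I. f i y * g i y) has_derivative
     (\<lambda>h. \<Sum>i\<in>I. f i x * frechet_derivative (g i) (at x) h + frechet_derivative (f i) (at x) h * g i x)) (at x)"
    using assms by (intro has_derivative_sum has_derivative_mult) (auto simp: frechet_derivative_works[symmetric])
  from frechet_derivative_at[OF this] show ?thesis
    unfolding pd_def by (metis (no_types, lifting) add.commute sum.cong)
qed

lemma cartan_formula:
  assumes "\<And>i. (\<lambda>y. Z y $ i) differentiable (at x)" "\<And>i. (\<lambda>y. \<xi> y $ i) differentiable (at x)"
  shows "dfun (pairing Z \<xi>) x + interior2 Z (dform1 \<xi>) x = lie_derivative_form Z \<xi> x"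
proof -
  have "pairing Z \<xi> = (\<lambda>y. \<Sum>i\<in>UNIV. Z y $ i * \<xi> y $ i)"
    by (simp add: fun_eq_iff pairing_def)
  then show ?thesis
    using pd_sum_mult[of UNIV "\<lambda>i y. Z y $ i" x "\<lambda>i y. \<xi> y $ i"] assms
    by (simp add: vec_eq_iff dfun_def interior2_def dform1_def lie_derivative_form_def
        sum.distrib[symmetric] algebra_simps)
qed

lemma hat_eq_sum:
  "hat r X Y a x = (\<Sum>t<r. vf_app (X t) a x *\<^sub>R Y t x - vf_app (Y t) a x *\<^sub>R X t x)"
  by (simp add: vec_eq_iff hat_def omega_up_def vf_app_def sum_component algebra_simps
      sum_subtractf sum_distrib_left sum_distrib_right sum.swap[of _ UNIV])

lemma hat_eq_vector_matrix_mult: "hat r X Y a x = dfun a x v* omega_up r X Y x"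
  by (simp add: vec_eq_iff hat_def dfun_def vector_matrix_mult_def mult.commute)

lemma hat_vector_matrix_mult_omega_low:
  "invertible (omega_up r X Y x) \<Longrightarrow> hat r X Y a x v* omega_low r X Y x = dfun a x"
  by (simp add: hat_eq_vector_matrix_mult vector_matrix_mul_assoc omega_low_def matrix_mul_matrix_inv)

lemma hat_contract_Gamma:
  assumes "invertible (omega_up r X Y x)"
  shows "(\<Sum>j\<in>UNIV. hat r X Y a x $ j * Gamma r X Y x i j p) =
    - (\<Sum>t<r. vf_app (X t) a x * pd p (\<lambda>y. Y t y $ i) x - vf_app (Y t) a x * pd p (\<lambda>y. X t y $ i) x)"
proof -
  define B where "B t s = X t x $ s * pd p (\<lambda>y. Y t y $ i) x - Y t x $ s * pd p (\<lambda>y. X t y $ i) x" for t s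
  have "(\<Sum>j\<in>UNIV. hat r X Y a x $ j * Gamma r X Y x i j p) =
      - (\<Sum>j\<in>UNIV. \<Sum>t<r. \<Sum>s\<in>UNIV. hat r X Y a x $ j * omega_low r X Y x $ j $ s * B t s)"
    unfolding Gamma_def B_def by (simp add: sum_distrib_left sum_negf mult_ac)
  also have "\<dots> = - (\<Sum>t<r. \<Sum>s\<in>UNIV. (hat r X Y a x v* omega_low r X Y x) $ s * B t s)"
    unfolding vector_matrix_mult_def sum_distrib_right
    by (subst sum.swap, rule arg_cong[where f=uminus], rule sum.cong[OF refl], subst sum.swap)
       (simp add: sum_distrib_left mult_ac)
  also have "\<dots> = - (\<Sum>t<r. \<Sum>s\<in>UNIV. pd s a x * B t s)"
    by (simp add: hat_vector_matrix_mult_omega_low[OF assms] dfun_def)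
  also have "\<dots> = - (\<Sum>t<r. vf_app (X t) a x * pd p (\<lambda>y. Y t y $ i) x - vf_app (Y t) a x * pd p (\<lambda>y. X t y $ i) x)"
    unfolding B_def vf_app_def
    by (simp add: algebra_simps sum_subtractf sum_distrib_left sum_distrib_right)
  finally show ?thesis .
qed

lemma nabla_hat_eq_lie_derivative:
  assumes "invertible (omega_up r X Y x)"
  shows "nabla r X Y (hat r X Y a) \<xi> x =
    (\<Sum>t<r. vf_app (X t) a x *\<^sub>R lie_derivative_form (Y t) \<xi> x
          - vf_app (Y t) a x *\<^sub>R lie_derivative_form (X t) \<xi> x)"
proof (rule iffD2[OF vec_eq_iff], rule allI)
  fix p
  define h where "h = hat r X Y a x"
  define Xa where "Xa t = vf_app (X t) a x" for t
  define Ya where "Ya t = vf_app (Y t) a x" for t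
  define D where "D Z = (\<Sum>j\<in>UNIV. Z x $ j * pd j (\<lambda>y. \<xi> y $ p) x)" for Z
  define C where "C Z = (\<Sum>i\<in>UNIV. \<xi> x $ i * pd p (\<lambda>y. Z y $ i) x)" for Z
  have derivative_part: "(\<Sum>j\<in>UNIV. h $ j * pd j (\<lambda>y. \<xi> y $ p) x) = (\<Sum>t<r. Xa t * D (Y t) - Ya t * D (X t))"
  proof -
    have "(\<Sum>j\<in>UNIV. h $ j * pd j (\<lambda>y. \<xi> y $ p) x) =
        (\<Sum>j\<in>UNIV. \<Sum>t<r. Xa t * (Y t x $ j * pd j (\<lambda>y. \<xi> y $ p) x) - Ya t * (X t x $ j * pd j (\<lambda>y. \<xi> y $ p) x))"
      unfolding h_def hat_eq_sum Xa_def Ya_def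
      by (simp add: sum_component sum_distrib_left right_diff_distrib sum_subtractf mult_ac)
    also have "\<dots> = (\<Sum>t<r. Xa t * D (Y t) - Ya t * D (X t))"
      unfolding D_def by (subst sum.swap) (simp add: sum_subtractf sum_distrib_left)
    finally show ?thesis .
  qed
  have connection_part:
    "(\<Sum>j\<in>UNIV. h $ j * (\<Sum>i\<in>UNIV. Gamma r X Y x i j p * \<xi> x $ i)) = - (\<Sum>t<r. Xa t * C (Y t) - Ya t * C (X t))"
  proof -
    have "(\<Sum>j\<in>UNIV. h $ j * (\<Sum>i\<in>UNIV. Gamma r X Y x i j p * \<xi> x $ i)) =
        (\<Sum>i\<in>UNIV. \<xi> x $ i * (\<Sum>j\<in>UNIV. h $ j * Gamma r X Y x i j p))"
      by (simp add: sum_distrib_left mult_ac) (rule sum.swap)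
    also have "\<dots> = - (\<Sum>i\<in>UNIV. \<Sum>t<r. Xa t * (\<xi> x $ i * pd p (\<lambda>y. Y t y $ i) x) - Ya t * (\<xi> x $ i * pd p (\<lambda>y. X t y $ i) x))"
      unfolding h_def hat_contract_Gamma[OF assms] Xa_def Ya_def
      by (simp add: sum_distrib_left right_diff_distrib sum_negf mult_ac)
    also have "\<dots> = - (\<Sum>t<r. Xa t * C (Y t) - Ya t * C (X t))"
      unfolding C_def by (subst sum.swap) (simp add: sum_subtractf sum_distrib_left)
    finally show ?thesis .
  qed
  have "nabla r X Y (hat r X Y a) \<xi> x $ p =
      (\<Sum>j\<in>UNIV. h $ j * pd j (\<lambda>y. \<xi> y $ p) x) - (\<Sum>j\<in>UNIV. h $ j * (\<Sum>i\<in>UNIV. Gamma r X Y x i j p * \<xi> x $ i))"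
    unfolding nabla_def h_def by (simp add: right_diff_distrib sum_subtractf)
  also have "\<dots> = (\<Sum>t<r. Xa t * (D (Y t) + C (Y t)) - Ya t * (D (X t) + C (X t)))"
    unfolding derivative_part connection_part by (simp add: sum.distrib[symmetric] algebra_simps)
  also have "\<dots> = (\<Sum>t<r. vf_app (X t) a x *\<^sub>R lie_derivative_form (Y t) \<xi> x
          - vf_app (Y t) a x *\<^sub>R lie_derivative_form (X t) \<xi> x) $ p"
    unfolding Xa_def Ya_def D_def C_def lie_derivative_form_def
    by (simp add: sum_component sum.distrib)
  finally show "nabla r X Y (hat r X Y a) \<xi> x $ p = \<dots>" .
qed

theorem proposition3p1p1:
  fixes U :: "(real^'n::finite) set"
    and r :: nat
    and X Y :: "nat \<Rightarrow> real^'n \<Rightarrow> real^'n"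
    and a :: "real^'n \<Rightarrow> real"
    and \<xi> :: "real^'n \<Rightarrow> real^'n"
    and x :: "real^'n"
  assumes "open U"
    and "\<And>s. s < r \<Longrightarrow> smooth_field_on U (X s)"
    and "\<And>s. s < r \<Longrightarrow> smooth_field_on U (Y s)"
    and "\<And>y. y \<in> U \<Longrightarrow> invertible (omega_up r X Y y)"
    and "smooth_fun_on U a"
    and "smooth_field_on U \<xi>"
    and "x \<in> U"
  shows "nabla r X Y (hat r X Y a) \<xi> x =
    (\<Sum>s<r. vf_app (X s) a x *\<^sub>R (dfun (pairing (Y s) \<xi>) x + interior2 (Y s) (dform1 \<xi>) x)
          - vf_app (Y s) a x *\<^sub>R (dfun (pairing (X s) \<xi>) x + interior2 (X s) (dform1 \<xi>) x))"
proof -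
  have cartan: "dfun (pairing Z \<xi>) x + interior2 Z (dform1 \<xi>) x = lie_derivative_form Z \<xi> x"
    if "smooth_field_on U Z" for Z
    using that assms(6,7) by (intro cartan_formula) (auto intro: smooth_field_on_differentiable)
  show ?thesis
    unfolding nabla_hat_eq_lie_derivative[OF assms(4)[OF \<open>x \<in> U\<close>]]
    using assms(2,3) by (intro sum.cong) (simp_all add: cartan)
qed

end
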